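(* Let $k\geq 3$ be an integer and let $G$ be a graph on $n$ vertices with minimum degree $\delta(G)\geq\delta>\frac{(k-1)n}{k}$, with at least two $K_{k+1}$-components, and such that $G[\mathrm{int}_k(G)]$ contains no copy of $K_k$. Let $C_1,\dots,C_p$ be the $K_{k+1}$-components of $G$ and set $q':=k\delta-(k-1)n+\sum_{j\neq 1}|\mathrm{ext}(C_j)|-|\mathrm{ext}(C_1)|$. Then $CK_{k+1}F(G)\geq(k+1)\min\left\{k\delta-(k-1)n,\left\lfloor\frac{|\mathrm{ext}(C_1)|}{2}\right\rfloor,q'\right\}$.
   Context: A $K_{k+1}$-walk in $G$ is a sequence of copies of $K_k$ in which consecutive copies lie in a common copy of $K_{k+1}$; its endpoints are then $K_{k+1}$-connected; the equivalence classes of copies of $K_k$ are the $K_{k+1}$-components. The vertices of a component are the vertices of its copies of $K_k$. $\mathrm{int}_k(G)$ is the set of vertices lying in more than one component; $\mathrm{ext}(C)$ is the set of vertices of $C$ lying in no other component. A $K_{k+1}$-factor is a set of vertex-disjoint copies of $K_{k+1}$; it is connected if all copies of $K_k$ contained in its members lie in one component; its size is the number of covered vertices; $CK_{k+1}F(G)$ is the maximum size of a connected $K_{k+1}$-factor in $G$. *)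

theory Defs
  imports Complex_Main
begin

definition is_graph :: "'a set \<Rightarrow> ('a \<Rightarrow> 'a \<Rightarrow> bool) \<Rightarrow> bool" where
  "is_graph V E \<longleftrightarrow> finite V \<and> (\<forall>x y. E x y \<longrightarrow> x \<in> V \<and> y \<in> V)
     \<and> (\<forall>x y. E x y \<longrightarrow> E y x) \<and> (\<forall>x. \<not> E x x)"

definition degree :: "'a set \<Rightarrow> ('a \<Rightarrow> 'a \<Rightarrow> bool) \<Rightarrow> 'a \<Rightarrow> nat" where
  "degree V E v = card {u \<in> V. E v u}"

definition is_clique :: "('a \<Rightarrow> 'a \<Rightarrow> bool) \<Rightarrow> 'a set \<Rightarrow> bool" where
  "is_clique E S \<longleftrightarrow> (\<forall>x\<in>S. \<forall>y\<in>S. x \<noteq> y \<longrightarrow> E x y)"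

definition kcliques :: "'a set \<Rightarrow> ('a \<Rightarrow> 'a \<Rightarrow> bool) \<Rightarrow> nat \<Rightarrow> 'a set set" where
  "kcliques V E k = {S. S \<subseteq> V \<and> card S = k \<and> is_clique E S}"

definition walk_step :: "'a set \<Rightarrow> ('a \<Rightarrow> 'a \<Rightarrow> bool) \<Rightarrow> nat \<Rightarrow> ('a set \<times> 'a set) set" where
  "walk_step V E k = {(A, B). A \<in> kcliques V E k \<and> B \<in> kcliques V E k \<and>
      (\<exists>T \<in> kcliques V E (Suc k). A \<subseteq> T \<and> B \<subseteq> T)}"

definition kconn :: "'a set \<Rightarrow> ('a \<Rightarrow> 'a \<Rightarrow> bool) \<Rightarrow> nat \<Rightarrow> ('a set \<times> 'a set) set" where
  "kconn V E k = (walk_step V E k)\<^sup>* \<inter> (kcliques V E k \<times> kcliques V E k)"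

definition kcomponents :: "'a set \<Rightarrow> ('a \<Rightarrow> 'a \<Rightarrow> bool) \<Rightarrow> nat \<Rightarrow> 'a set set set" where
  "kcomponents V E k = kcliques V E k // kconn V E k"

definition comp_verts :: "'a set set \<Rightarrow> 'a set" where
  "comp_verts C = \<Union>C"

definition int_k :: "'a set \<Rightarrow> ('a \<Rightarrow> 'a \<Rightarrow> bool) \<Rightarrow> nat \<Rightarrow> 'a set" where
  "int_k V E k = {v \<in> V. 2 \<le> card {C \<in> kcomponents V E k. v \<in> comp_verts C}}"

definition ext :: "'a set \<Rightarrow> ('a \<Rightarrow> 'a \<Rightarrow> bool) \<Rightarrow> nat \<Rightarrow> 'a set set \<Rightarrow> 'a set" where
  "ext V E k C = {v \<in> comp_verts C. \<forall>D \<in> kcomponents V E k. D \<noteq> C \<longrightarrow> v \<notin> comp_verts D}"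

definition is_factor :: "'a set \<Rightarrow> ('a \<Rightarrow> 'a \<Rightarrow> bool) \<Rightarrow> nat \<Rightarrow> 'a set set \<Rightarrow> bool" where
  "is_factor V E k F \<longleftrightarrow> F \<subseteq> kcliques V E (Suc k) \<and>
     (\<forall>T1\<in>F. \<forall>T2\<in>F. T1 \<noteq> T2 \<longrightarrow> T1 \<inter> T2 = {})"

definition is_connected_factor :: "'a set \<Rightarrow> ('a \<Rightarrow> 'a \<Rightarrow> bool) \<Rightarrow> nat \<Rightarrow> 'a set set \<Rightarrow> bool" where
  "is_connected_factor V E k F \<longleftrightarrow> is_factor V E k F \<and>
     (\<forall>A B. (\<exists>T\<in>F. A \<subseteq> T \<and> card A = k) \<longrightarrow> (\<exists>T\<in>F. B \<subseteq> T \<and> card B = k)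
        \<longrightarrow> (A, B) \<in> kconn V E k)"

definition CKF :: "'a set \<Rightarrow> ('a \<Rightarrow> 'a \<Rightarrow> bool) \<Rightarrow> nat \<Rightarrow> nat" where
  "CKF V E k = Max {card (\<Union>F) | F. is_connected_factor V E k F}"

end

(*
  Write D = n - delta, so that every vertex has at most D non-neighbours (itself
  included) and kD < n.  Let X = ext(C1), I = int_k(G) and let Z be the union of the
  sets ext(C) of the other components.  Every vertex lies in X, I or Z; vertices in
  the ext sets of different components are non-adjacent, because an edge between
  them would extend to a copy of K_(k+1) joining the two components; and I, which
  contains no K_k, has at most (k - 1) D vertices by greedy clique growth.  Hence every
  vertex of X has at least |X| + |Z| - D >= n - kD neighbours in X, which gives a
  matching of size s in G[X].  Its edges are completed one after the other to copies
  of K_(k+1) by adding k - 1 common neighbours from the unused part of I: an unused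
  interior vertex misses a vertex of every clique built so far (otherwise I would
  contain a K_k), and the count of common neighbours stays large enough as long as
  s - 1 < q'.  All these cliques meet ext(C1), so all their copies of K_k lie in C1
  and they form a connected K_(k+1)-factor covering (k + 1) s vertices.
*)

theory Submission
  imports Defs
begin

section \<open>Non-neighbourhoods and greedy cliques\<close>

definition non_nbrs :: "'a set \<Rightarrow> ('a \<Rightarrow> 'a \<Rightarrow> bool) \<Rightarrow> 'a \<Rightarrow> 'a set" where
  "non_nbrs P E v = {u \<in> P. \<not> E v u}"

lemma non_nbrs_mono: "P \<subseteq> Q \<Longrightarrow> non_nbrs P E v \<subseteq> non_nbrs Q E v"
  unfolding non_nbrs_def by blast

locale simple_graph =
  fixes V :: "'a set" and E :: "'a \<Rightarrow> 'a \<Rightarrow> bool"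
  assumes graph: "is_graph V E"
begin

lemma finite_V: "finite V"
  and edge_sym: "E x y \<Longrightarrow> E y x"
  and edge_irrefl: "\<not> E x x"
  and edge_in_V: "E x y \<Longrightarrow> x \<in> V \<and> y \<in> V"
  using graph unfolding is_graph_def by auto

lemma finite_if_subset_V: "A \<subseteq> V \<Longrightarrow> finite A"
  by (rule finite_subset[OF _ finite_V])

lemma card_non_nbrs_plus_degree: "card (non_nbrs V E v) + degree V E v = card V"
proof -
  have "V = non_nbrs V E v \<union> {u \<in> V. E v u}"
    unfolding non_nbrs_def by blast
  moreover have "card (non_nbrs V E v \<union> {u \<in> V. E v u}) = card (non_nbrs V E v) + degree V E v"
    unfolding degree_def non_nbrs_def using finite_V by (intro card_Un_disjoint) auto
  ultimately show ?thesis by simp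
qed

lemma self_in_non_nbrs: "v \<in> P \<Longrightarrow> v \<in> non_nbrs P E v"
  unfolding non_nbrs_def using edge_irrefl by simp

lemma common_nbr_exists:
  assumes "P \<subseteq> V" "finite S" and few: "(\<Sum>v\<in>S. card (non_nbrs P E v)) < card P"
  shows "\<exists>w\<in>P. \<forall>v\<in>S. E v w"
proof -
  have "card (\<Union>v\<in>S. non_nbrs P E v) < card P"
    using card_UN_le[OF \<open>finite S\<close>] few by (rule le_less_trans)
  moreover have "(\<Union>v\<in>S. non_nbrs P E v) \<subseteq> P"
    unfolding non_nbrs_def by blast
  ultimately have "(\<Union>v\<in>S. non_nbrs P E v) \<subset> P"
    by (metis psubsetI less_irrefl)
  then obtain w where "w \<in> P" "w \<notin> (\<Union>v\<in>S. non_nbrs P E v)"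
    by blast
  then show ?thesis unfolding non_nbrs_def by blast
qed

lemma clique_extend_greedy:
  assumes "P \<subseteq> V" "S0 \<subseteq> P" "is_clique E S0" "card S0 \<le> m" "0 \<le> d"
    and sparse: "\<forall>v\<in>P. real (card (non_nbrs P E v)) \<le> d"
    and big: "real (m - 1) * d < real (card P)"
  shows "\<exists>S. S0 \<subseteq> S \<and> S \<subseteq> P \<and> is_clique E S \<and> card S = m"
  using assms(4) big
proof (induction m)
  case 0
  moreover have "finite S0" using assms(1,2) by (intro finite_if_subset_V) blast
  ultimately have "S0 = {}" by simp
  then show ?case by (intro exI[of _ "{}"]) (simp add: is_clique_def)
next
  case (Suc m)
  show ?case
  proof (cases "card S0 = Suc m")
    case True
    then show ?thesis using assms(2,3) by blast
  next
    case False
    have "real (m - 1) * d \<le> real m * d" using \<open>0 \<le> d\<close> by (simp add: mult_right_mono)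
    then have "card S0 \<le> m" "real (m - 1) * d < real (card P)"
      using Suc.prems False by auto
    then obtain S where S: "S0 \<subseteq> S" "S \<subseteq> P" "is_clique E S" "card S = m"
      using Suc.IH by blast
    have "finite S" using S(2) assms(1) by (intro finite_if_subset_V) blast
    have "real (\<Sum>v\<in>S. card (non_nbrs P E v)) \<le> real m * d"
      unfolding of_nat_sum using sum_bounded_above[of S "\<lambda>v. real (card (non_nbrs P E v))" d]
        sparse S(2,4) by blast
    moreover have "real m * d < real (card P)" using Suc.prems(2) by simp
    ultimately have "(\<Sum>v\<in>S. card (non_nbrs P E v)) < card P" by linarith
    then obtain w where w: "w \<in> P" "\<forall>v\<in>S. E v w"
      using common_nbr_exists[OF assms(1) \<open>finite S\<close>] by blast
    then have "w \<notin> S" using edge_irrefl by blast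
    then have "is_clique E (insert w S)" "card (insert w S) = Suc m"
      using S(3,4) w(2) edge_sym \<open>finite S\<close> unfolding is_clique_def by auto
    then show ?thesis using S w(1) by (intro exI[of _ "insert w S"]) auto
  qed
qed

lemma card_le_if_clique_free:
  assumes "P \<subseteq> V" "0 < m" "0 \<le> d"
    and "\<forall>v\<in>P. real (card (non_nbrs P E v)) \<le> d"
    and "\<not> (\<exists>S\<subseteq>P. card S = m \<and> is_clique E S)"
  shows "real (card P) \<le> real (m - 1) * d"
  using clique_extend_greedy[of P "{}" m d] assms by (force simp: is_clique_def)

end

section \<open>Matchings\<close>

definition is_matching :: "('a \<Rightarrow> 'a \<Rightarrow> bool) \<Rightarrow> 'a set \<Rightarrow> 'a set set \<Rightarrow> bool" where
  "is_matching E X M \<longleftrightarrow> pairwise disjnt M \<and> \<Union>M \<subseteq> X \<and> (\<forall>e\<in>M. \<exists>a b. a \<noteq> b \<and> E a b \<and> e = {a, b})"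

context simple_graph
begin

lemma card_Union_matching:
  assumes "is_matching E X M"
  shows "card (\<Union>M) = 2 * card M"
proof -
  have "card (\<Union>M) = sum card M"
    using assms unfolding is_matching_def by (intro card_Union_disjoint) auto
  also have "\<dots> = sum (\<lambda>_. 2) M"
    using assms unfolding is_matching_def by (intro sum.cong) auto
  finally show ?thesis by simp
qed

lemma finite_matching: "is_matching E X M \<Longrightarrow> X \<subseteq> V \<Longrightarrow> finite M"
  unfolding is_matching_def
  by (rule finite_subset[of _ "Pow X"]) (auto intro: finite_if_subset_V)

lemma matching_edgeE:
  assumes "is_matching E X M" "e \<in> M"
  obtains a b where "a \<noteq> b" "E a b" "e = {a, b}" "a \<in> X" "b \<in> X"
proof -
  have "\<forall>e\<in>M. \<exists>a b. a \<noteq> b \<and> E a b \<and> e = {a, b}" "\<Union>M \<subseteq> X"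
    using assms(1) unfolding is_matching_def by simp_all
  then obtain a b where ab: "a \<noteq> b" "E a b" "e = {a, b}" using assms(2) by meson
  moreover have "a \<in> X" "b \<in> X" using \<open>\<Union>M \<subseteq> X\<close> assms(2) ab(3) by auto
  ultimately show ?thesis by (rule that)
qed

lemma matching_insert:
  assumes M: "is_matching E X M" "X \<subseteq> V"
    and ab: "a \<in> X - \<Union>M" "b \<in> X - \<Union>M" "a \<noteq> b" "E a b"
  shows "is_matching E X (insert {a, b} M) \<and> card (insert {a, b} M) = Suc (card M)"
proof -
  have "{a, b} \<notin> M" using ab(1) by blast
  then show ?thesis
    using M ab finite_matching[OF M] unfolding is_matching_def pairwise_insert disjnt_def
    by auto
qed

text \<open>Augmenting path of length three through the matching edge \<open>{a, b}\<close>.\<close>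
lemma matching_augment:
  assumes M: "is_matching E X M" "X \<subseteq> V" and ab: "{a, b} \<in> M" "a \<in> X" "b \<in> X" "a \<noteq> b"
    and uv: "u \<in> X - \<Union>M" "v \<in> X - \<Union>M" "u \<noteq> v" and adj: "E u a" "E v b"
  defines "M' \<equiv> insert {u, a} (insert {v, b} (M - {{a, b}}))"
  shows "is_matching E X M' \<and> card M' = Suc (card M)"
proof -
  have pw: "pairwise disjnt M" using M(1) unfolding is_matching_def by simp
  have disj_ab: "disjnt e {a, b}" if "e \<in> M - {{a, b}}" for e
    using pairwiseD[OF pw] ab(1) that by blast
  have new: "u \<noteq> a" "u \<noteq> b" "v \<noteq> a" "v \<noteq> b" using uv ab by auto
  have fin: "finite M" using finite_matching[OF M] .
  have "{u, a} \<notin> insert {v, b} (M - {{a, b}})" "{v, b} \<notin> M - {{a, b}}"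
    using uv new by (auto simp: doubleton_eq_iff)
  then have "card M' = Suc (Suc (card (M - {{a, b}})))"
    unfolding M'_def using fin by simp
  also have "\<dots> = Suc (card M)" using card_Suc_Diff1[OF fin ab(1)] by simp
  finally have "card M' = Suc (card M)" .
  moreover have "pairwise disjnt M'"
    unfolding M'_def pairwise_insert
    using pairwise_subset[OF pw] uv new ab(4) disj_ab by (auto simp: disjnt_def)
  moreover have "\<Union>M' \<subseteq> X"
    unfolding M'_def using M(1) uv ab unfolding is_matching_def by blast
  moreover have "\<forall>e\<in>M'. \<exists>a b. a \<noteq> b \<and> E a b \<and> e = {a, b}"
    unfolding M'_def using M(1) new adj unfolding is_matching_def by blast
  ultimately show ?thesis unfolding is_matching_def by blast
qed

lemma card_nbrs_doubleton:
  assumes "a \<noteq> b" "a \<in> X" "b \<in> X"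
  shows "card ({y \<in> X. E u y} \<inter> {a, b}) = of_bool (E u a) + of_bool (E u b)"
proof -
  have "{y \<in> X. E u y} \<inter> {a, b} = (if E u a then {a} else {}) \<union> (if E u b then {b} else {})"
    using assms by auto
  then show ?thesis using assms by simp
qed

lemma unmatched_pair_exists:
  assumes M: "is_matching E X M" "X \<subseteq> V" and size: "2 * card M + 2 \<le> card X"
  obtains u v where "u \<in> X - \<Union>M" "v \<in> X - \<Union>M" "u \<noteq> v"
proof -
  have "\<Union>M \<subseteq> X" using M(1) unfolding is_matching_def by blast
  moreover from this have "finite (\<Union>M)" using finite_if_subset_V M(2) by blast
  ultimately have "card (X - \<Union>M) = card X - 2 * card M"
    using card_Diff_subset card_Union_matching[OF M(1)] by metis
  then have "Suc (Suc 0) \<le> card (X - \<Union>M)" using size by linarith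
  then obtain u B where uB: "X - \<Union>M = insert u B" "u \<notin> B" "Suc 0 \<le> card B"
    unfolding card_le_Suc_iff by blast
  then obtain v where "v \<in> B" by (cases "B = {}") auto
  then show ?thesis using that uB by auto
qed

lemma card_nbrs_covered_by_matching:
  assumes M: "is_matching E X M" "X \<subseteq> V" and covered: "{y \<in> X. E x y} \<subseteq> \<Union>M"
  shows "card {y \<in> X. E x y} = (\<Sum>e\<in>M. card ({y \<in> X. E x y} \<inter> e))"
proof -
  let ?N = "{y \<in> X. E x y}"
  have "card ?N = card (\<Union>e\<in>M. ?N \<inter> e)"
    using covered by (intro arg_cong[where f = card]) blast
  also have "\<dots> = (\<Sum>e\<in>M. card (?N \<inter> e))"
  proof (rule card_UN_disjoint)
    show "finite M" using finite_matching[OF M] .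
    show "\<forall>e\<in>M. finite (?N \<inter> e)" using finite_if_subset_V M(2) by simp
    have "pairwise disjnt M" using M(1) unfolding is_matching_def by simp
    then show "\<forall>e\<in>M. \<forall>e'\<in>M. e \<noteq> e' \<longrightarrow> ?N \<inter> e \<inter> (?N \<inter> e') = {}"
      unfolding pairwise_def disjnt_def by blast
  qed
  finally show ?thesis .
qed

text \<open>Pigeonhole: some matching edge receives three of the edges leaving \<open>u\<close> and \<open>v\<close>.\<close>
lemma augmenting_edge_exists:
  assumes M: "is_matching E X M" "X \<subseteq> V"
    and uv: "{y \<in> X. E u y} \<subseteq> \<Union>M" "{y \<in> X. E v y} \<subseteq> \<Union>M"
    and many: "2 * card M < card {y \<in> X. E u y} + card {y \<in> X. E v y}"
  obtains a b where "{a, b} \<in> M" "a \<in> X" "b \<in> X" "a \<noteq> b" "E u a" "E v b"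
proof -
  let ?N = "\<lambda>x. {y \<in> X. E x y}"
  have "(\<Sum>e\<in>M. 2) < (\<Sum>e\<in>M. card (?N u \<inter> e) + card (?N v \<inter> e))"
    using many card_nbrs_covered_by_matching[OF M] uv by (simp add: sum.distrib)
  then obtain e where e: "e \<in> M" "2 < card (?N u \<inter> e) + card (?N v \<inter> e)"
    using sum_mono[of M "\<lambda>e. card (?N u \<inter> e) + card (?N v \<inter> e)" "\<lambda>_. 2"] by force
  then obtain a b where ab: "a \<noteq> b" "e = {a, b}" and abX: "a \<in> X" "b \<in> X"
    using matching_edgeE[OF M(1)] by metis
  have "(E u a \<and> E v b) \<or> (E u b \<and> E v a)"
    using e(2) unfolding ab(2) card_nbrs_doubleton[OF ab(1) abX]
    by (auto simp: of_bool_def split: if_splits)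
  moreover have "{a, b} \<in> M" "{b, a} \<in> M" using e(1) ab(2) by (simp_all add: insert_commute)
  ultimately show ?thesis using that abX ab(1) by blast
qed

lemma matching_grow:
  assumes X: "X \<subseteq> V" and deg: "\<forall>x\<in>X. s \<le> card {y \<in> X. E x y}" and size: "2 * s \<le> card X"
    and M: "is_matching E X M" "card M < s"
  shows "\<exists>M'. is_matching E X M' \<and> card M' = Suc (card M)"
proof (cases "\<exists>p\<in>X - \<Union>M. \<exists>q\<in>X - \<Union>M. E p q")
  case True
  then obtain p q where pq: "p \<in> X - \<Union>M" "q \<in> X - \<Union>M" "E p q" by blast
  then have "p \<noteq> q" using edge_irrefl by blast
  then show ?thesis using matching_insert[OF M(1) X pq(1,2) _ pq(3)] by blast
next
  case False
  have "2 * card M + 2 \<le> card X" using size M(2) by linarith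
  then obtain u v where uv: "u \<in> X - \<Union>M" "v \<in> X - \<Union>M" "u \<noteq> v"
    by (rule unmatched_pair_exists[OF M(1) X])
  have covered: "{y \<in> X. E u y} \<subseteq> \<Union>M" "{y \<in> X. E v y} \<subseteq> \<Union>M"
    using False uv(1,2) by blast+
  have "s \<le> card {y \<in> X. E u y}" "s \<le> card {y \<in> X. E v y}" using deg uv(1,2) by auto
  then have "2 * card M < card {y \<in> X. E u y} + card {y \<in> X. E v y}" using M(2) by linarith
  then obtain a b where ab: "{a, b} \<in> M" "a \<in> X" "b \<in> X" "a \<noteq> b" "E u a" "E v b"
    by (rule augmenting_edge_exists[OF M(1) X covered])
  show ?thesis using matching_augment[OF M(1) X ab(1-4) uv ab(5,6)] by blast
qed

lemma matching_exists:
  assumes "X \<subseteq> V" "\<forall>x\<in>X. s \<le> card {y \<in> X. E x y}" "2 * s \<le> card X"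
  shows "\<exists>M. is_matching E X M \<and> card M = s"
proof -
  have "\<exists>M. is_matching E X M \<and> card M = r" if "r \<le> s" for r
    using that
  proof (induction r)
    case 0
    show ?case by (intro exI[of _ "{}"]) (simp add: is_matching_def)
  next
    case (Suc r)
    then obtain M where "is_matching E X M" "card M = r" by auto
    then show ?case using matching_grow[OF assms] Suc.prems by auto
  qed
  then show ?thesis by blast
qed

end

section \<open>\<open>K\<^sub>k\<^sub>+\<^sub>1\<close>-components\<close>

lemma kcliques_subset:
  "T \<in> kcliques V E m \<Longrightarrow> A \<subseteq> T \<Longrightarrow> A \<in> kcliques V E (card A)"
  unfolding kcliques_def is_clique_def by blast

lemma kconn_equiv: "equiv (kcliques V E k) (kconn V E k)"
proof (rule equivI)
  show "kconn V E k \<subseteq> kcliques V E k \<times> kcliques V E k"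
    unfolding kconn_def by blast
  show "refl_on (kcliques V E k) (kconn V E k)"
    unfolding refl_on_def kconn_def by auto
  have "sym (walk_step V E k)" unfolding sym_def walk_step_def by auto
  then show "sym (kconn V E k)"
    unfolding kconn_def using sym_rtrancl unfolding sym_def by blast
  show "trans (kconn V E k)"
    unfolding kconn_def trans_def by (auto intro: rtrancl_trans)
qed

lemma kconn_if_in_common_clique:
  assumes "T \<in> kcliques V E (Suc k)" "A \<subseteq> T" "B \<subseteq> T" "card A = k" "card B = k"
  shows "(A, B) \<in> kconn V E k"
proof -
  have "A \<in> kcliques V E k" "B \<in> kcliques V E k"
    using kcliques_subset[OF assms(1) assms(2)] kcliques_subset[OF assms(1) assms(3)] assms(4,5)
    by simp_all
  then show ?thesis unfolding kconn_def walk_step_def using assms(1-3) by auto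
qed

lemma kconn_class_in_kcomponents:
  assumes "Q \<in> kcliques V E k"
  shows "kconn V E k `` {Q} \<in> kcomponents V E k" "Q \<in> kconn V E k `` {Q}"
  unfolding kcomponents_def
  by (rule quotientI[OF assms]) (rule equiv_class_self[OF kconn_equiv assms])

lemma kcomponent_subset: "C \<in> kcomponents V E k \<Longrightarrow> C \<subseteq> kcliques V E k"
  unfolding kcomponents_def using kconn_equiv by (rule in_quotient_imp_subset)

lemma kcomponent_closed:
  "C \<in> kcomponents V E k \<Longrightarrow> A \<in> C \<Longrightarrow> (A, B) \<in> kconn V E k \<Longrightarrow> B \<in> C"
  unfolding kcomponents_def using kconn_equiv by (rule in_quotient_imp_closed)

lemma kclique_in_kcomponent_if_ext:
  assumes "C \<in> kcomponents V E k" "v \<in> ext V E k C" "Q \<in> kcliques V E k" "v \<in> Q"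
  shows "Q \<in> C"
proof -
  let ?C' = "kconn V E k `` {Q}"
  have C': "?C' \<in> kcomponents V E k" "Q \<in> ?C'" using kconn_class_in_kcomponents[OF assms(3)] .
  have "v \<in> comp_verts ?C'" unfolding comp_verts_def using C'(2) assms(4) by (rule UnionI)
  moreover have "\<forall>D\<in>kcomponents V E k. D \<noteq> C \<longrightarrow> v \<notin> comp_verts D"
    using assms(2) unfolding ext_def by simp
  ultimately have "?C' = C" using C'(1) by meson
  then show ?thesis using C'(2) by simp
qed

text \<open>A copy of \<open>K\<^sub>k\<^sub>+\<^sub>1\<close> through an exclusive vertex of \<open>C\<close> has all its
  copies of \<open>K\<^sub>k\<close> in \<open>C\<close>: the one containing that vertex is in \<open>C\<close>, and it is
  joined to all others through a single walk step.\<close>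
lemma subclique_in_kcomponent_if_ext:
  assumes "C \<in> kcomponents V E k" "T \<in> kcliques V E (Suc k)" "x \<in> T" "x \<in> ext V E k C"
    and "A \<subseteq> T" "card A = k" "0 < k"
  shows "A \<in> C"
proof -
  have "finite T" "card T = Suc k" using assms(2) unfolding kcliques_def by (auto intro: card_ge_0_finite)
  then have "0 < card (T - {x})" using assms(3,7) by simp
  then obtain w where w: "w \<in> T" "w \<noteq> x" unfolding card_gt_0_iff by blast
  have card_Tw: "card (T - {w}) = k" using \<open>finite T\<close> \<open>card T = Suc k\<close> w(1) by simp
  then have "T - {w} \<in> kcliques V E k" using kcliques_subset[OF assms(2), of "T - {w}"] by auto
  then have "T - {w} \<in> C" using kclique_in_kcomponent_if_ext[OF assms(1,4)] w assms(3) by blast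
  moreover have "(T - {w}, A) \<in> kconn V E k"
    using kconn_if_in_common_clique[OF assms(2) _ assms(5) card_Tw assms(6)] by blast
  ultimately show ?thesis using kcomponent_closed[OF assms(1)] by blast
qed

lemma ext_subset_V:
  assumes "C \<in> kcomponents V E k" shows "ext V E k C \<subseteq> V"
proof
  fix v assume "v \<in> ext V E k C"
  then obtain Q where "Q \<in> C" "v \<in> Q" unfolding ext_def comp_verts_def by blast
  then show "v \<in> V" using kcomponent_subset[OF assms] unfolding kcliques_def by blast
qed

lemma ext_not_in_int:
  assumes "C \<in> kcomponents V E k" "v \<in> ext V E k C"
  shows "v \<notin> int_k V E k"
proof -
  have "{C' \<in> kcomponents V E k. v \<in> comp_verts C'} \<subseteq> {C}"
    using assms(2) unfolding ext_def by blast
  then have "card {C' \<in> kcomponents V E k. v \<in> comp_verts C'} \<le> 1"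
    using card_mono[of "{C}"] by fastforce
  then show ?thesis unfolding int_k_def by simp
qed

lemma ext_disjoint:
  "C \<noteq> C' \<Longrightarrow> C' \<in> kcomponents V E k \<Longrightarrow> ext V E k C \<inter> ext V E k C' = {}"
  unfolding ext_def by blast

lemma connected_factor_if_meets_ext:
  assumes "F \<subseteq> kcliques V E (Suc k)" "pairwise disjnt F" "0 < k"
    and "C \<in> kcomponents V E k" "\<forall>T\<in>F. T \<inter> ext V E k C \<noteq> {}"
  shows "is_connected_factor V E k F"
  unfolding is_connected_factor_def is_factor_def
proof (intro conjI allI impI)
  show "F \<subseteq> kcliques V E (Suc k)" by (rule assms(1))
  show "\<forall>T1\<in>F. \<forall>T2\<in>F. T1 \<noteq> T2 \<longrightarrow> T1 \<inter> T2 = {}"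
    using assms(2) unfolding pairwise_def disjnt_def by blast
  have in_C: "A \<in> C" if A: "\<exists>T\<in>F. A \<subseteq> T \<and> card A = k" for A
  proof -
    obtain T where T: "T \<in> F" "A \<subseteq> T" "card A = k" using A by blast
    then obtain x where x: "x \<in> T" "x \<in> ext V E k C" using assms(5) by blast
    have "T \<in> kcliques V E (Suc k)" using assms(1) T(1) by blast
    then show ?thesis by (rule subclique_in_kcomponent_if_ext[OF assms(4) _ x T(2,3) assms(3)])
  qed
  fix A B
  assume "\<exists>T\<in>F. A \<subseteq> T \<and> card A = k" "\<exists>T\<in>F. B \<subseteq> T \<and> card B = k"
  then have "{A, B} \<subseteq> C" using in_C by simp
  then show "(A, B) \<in> kconn V E k"
    by (rule in_quotient_imp_in_rel[OF kconn_equiv assms(4)[unfolded kcomponents_def]])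
qed

context simple_graph
begin

lemma finite_kcomponents: "finite (kcomponents V E k)"
proof -
  have "kcliques V E k \<subseteq> Pow V" unfolding kcliques_def by blast
  then have "finite (kcliques V E k)" using finite_V by (meson finite_Pow_iff finite_subset)
  moreover have "kcomponents V E k \<subseteq> Pow (kcliques V E k)" using kcomponent_subset by blast
  ultimately show ?thesis by (meson finite_Pow_iff finite_subset)
qed

lemma ext_if_not_in_int:
  assumes "v \<notin> int_k V E k" "v \<in> V" "C \<in> kcomponents V E k" "v \<in> comp_verts C"
  shows "v \<in> ext V E k C"
proof -
  let ?Cs = "{C \<in> kcomponents V E k. v \<in> comp_verts C}"
  have "card ?Cs \<le> Suc 0" using assms(1,2) unfolding int_k_def by simp
  moreover have "finite ?Cs" using finite_kcomponents by simp
  ultimately have "\<forall>C1\<in>?Cs. \<forall>C2\<in>?Cs. C1 = C2" using card_le_Suc0_iff_eq by blast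
  then have "\<forall>D\<in>kcomponents V E k. D \<noteq> C \<longrightarrow> v \<notin> comp_verts D" using assms(3,4) by blast
  then show ?thesis using assms(4) unfolding ext_def by simp
qed

lemma ext_nonempty:
  assumes "\<not> (\<exists>S\<subseteq>int_k V E k. card S = k \<and> is_clique E S)" "C \<in> kcomponents V E k"
  shows "ext V E k C \<noteq> {}"
proof -
  obtain Q where Q: "Q \<in> C"
    using in_quotient_imp_non_empty[OF kconn_equiv] assms(2) unfolding kcomponents_def by blast
  then have "Q \<in> kcliques V E k" using kcomponent_subset[OF assms(2)] by blast
  then obtain v where "v \<in> Q" "v \<notin> int_k V E k" "v \<in> V"
    using assms(1) unfolding kcliques_def by blast
  moreover from this have "v \<in> comp_verts C" using Q unfolding comp_verts_def by blast
  ultimately show ?thesis using ext_if_not_in_int[OF _ _ assms(2)] by blast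
qed

lemma card_Union_kcliques:
  assumes "F \<subseteq> kcliques V E m" "pairwise disjnt F"
  shows "card (\<Union>F) = m * card F"
proof -
  have "card (\<Union>F) = sum card F"
    using assms unfolding kcliques_def by (intro card_Union_disjoint) (auto intro: finite_if_subset_V)
  also have "\<dots> = sum (\<lambda>_. m) F"
    using assms(1) unfolding kcliques_def by (intro sum.cong) auto
  finally show ?thesis by simp
qed

lemma card_Union_le_CKF:
  assumes "is_connected_factor V E k F"
  shows "card (\<Union>F) \<le> CKF V E k"
proof -
  have "card (\<Union>F') \<le> card V" if "is_connected_factor V E k F'" for F'
  proof (rule card_mono[OF finite_V])
    show "\<Union>F' \<subseteq> V" using that unfolding is_connected_factor_def is_factor_def kcliques_def by blast
  qed
  then have "{card (\<Union>F) | F. is_connected_factor V E k F} \<subseteq> {..card V}" by blast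
  then have "finite {card (\<Union>F) | F. is_connected_factor V E k F}"
    by (rule finite_subset) simp
  then show ?thesis unfolding CKF_def using assms by (intro Max_ge) blast+
qed

end

section \<open>Dense graphs\<close>

text \<open>\<open>D\<close> bounds the number of non-neighbours of a vertex, the vertex itself
  included; the theorem is applied with \<open>D = n - \<delta>\<close>.\<close>
locale dense_graph = simple_graph +
  fixes k :: nat and D :: real
  assumes k_pos: "0 < k"
    and card_non_nbrs_le: "\<forall>v\<in>V. real (card (non_nbrs V E v)) \<le> D"
    and dense: "real k * D < real (card V)"
begin

lemma one_le_D:
  assumes "v \<in> V" shows "1 \<le> D"
proof -
  have "finite (non_nbrs V E v)" by (rule finite_if_subset_V) (auto simp: non_nbrs_def)
  then have "0 < card (non_nbrs V E v)"
    using self_in_non_nbrs[OF assms] unfolding card_gt_0_iff by blast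
  then show ?thesis using card_non_nbrs_le assms by fastforce
qed

lemma clique_extend:
  assumes "S0 \<subseteq> V" "S0 \<noteq> {}" "is_clique E S0" "card S0 \<le> m" "m \<le> Suc k"
  shows "\<exists>S. S0 \<subseteq> S \<and> S \<subseteq> V \<and> is_clique E S \<and> card S = m"
proof (rule clique_extend_greedy[OF subset_refl assms(1,3,4)])
  show "0 \<le> D" using assms(1,2) one_le_D by fastforce
  moreover have "real (m - 1) \<le> real k" using assms(5) by simp
  ultimately have "real (m - 1) * D \<le> real k * D" by (rule mult_right_mono[rotated])
  then show "real (m - 1) * D < real (card V)" using dense by linarith
qed (use card_non_nbrs_le in blast)

lemma ext_nonadjacent:
  assumes "C \<in> kcomponents V E k" "C' \<in> kcomponents V E k" "C \<noteq> C'"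
    and "x \<in> ext V E k C" "y \<in> ext V E k C'"
  shows "\<not> E x y"
proof
  assume "E x y"
  then have "x \<noteq> y" "{x, y} \<subseteq> V" "is_clique E {x, y}"
    using edge_irrefl edge_in_V edge_sym unfolding is_clique_def by auto
  moreover have "card {x, y} \<le> Suc k" using \<open>x \<noteq> y\<close> k_pos by simp
  ultimately obtain T where T: "{x, y} \<subseteq> T" "T \<subseteq> V" "is_clique E T" "card T = Suc k"
    using clique_extend[of "{x, y}" "Suc k"] by blast
  then have "T \<in> kcliques V E (Suc k)" unfolding kcliques_def by blast
  moreover have "card (T - {x}) = k" using T by (simp add: card_ge_0_finite)
  ultimately have "T - {x} \<in> C"
    using subclique_in_kcomponent_if_ext[OF assms(1) _ _ assms(4)] T(1) k_pos by blast
  then have "y \<in> comp_verts C" using T(1) \<open>x \<noteq> y\<close> unfolding comp_verts_def by blast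
  then show False using assms(1,3,5) unfolding ext_def by blast
qed

lemma in_int_or_ext:
  assumes "v \<in> V"
  shows "v \<in> int_k V E k \<or> (\<exists>C\<in>kcomponents V E k. v \<in> ext V E k C)"
proof -
  have "is_clique E {v}" unfolding is_clique_def by blast
  then obtain Q where Q: "v \<in> Q" "Q \<subseteq> V" "is_clique E Q" "card Q = k"
    using clique_extend[of "{v}" k] assms k_pos by auto
  then have "Q \<in> kcliques V E k" unfolding kcliques_def by blast
  then have "kconn V E k `` {Q} \<in> kcomponents V E k" "v \<in> comp_verts (kconn V E k `` {Q})"
    using kconn_class_in_kcomponents Q(1) unfolding comp_verts_def by blast+
  then show ?thesis using ext_if_not_in_int assms by blast
qed

lemma card_non_nbrs_subset_le:
  assumes "P \<subseteq> V" "v \<in> V"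
  shows "real (card (non_nbrs P E v)) \<le> D"
proof -
  have "card (non_nbrs P E v) \<le> card (non_nbrs V E v)"
    using assms(1) by (intro card_mono finite_if_subset_V non_nbrs_mono) (auto simp: non_nbrs_def)
  then show ?thesis using card_non_nbrs_le assms(2) by fastforce
qed

end

section \<open>The factor construction\<close>

locale clique_free_interior = dense_graph +
  fixes C1 :: "'a set set"
  assumes two_le_k: "2 \<le> k"
    and C1_component: "C1 \<in> kcomponents V E k"
    and two_components: "2 \<le> card (kcomponents V E k)"
    and int_clique_free: "\<not> (\<exists>S\<subseteq>int_k V E k. card S = k \<and> is_clique E S)"
begin

abbreviation X :: "'a set" where "X \<equiv> ext V E k C1"
abbreviation I :: "'a set" where "I \<equiv> int_k V E k"
abbreviation Z :: "'a set" where "Z \<equiv> \<Union>C\<in>kcomponents V E k - {C1}. ext V E k C"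

lemma X_subset_V: "X \<subseteq> V"
  by (rule ext_subset_V[OF C1_component])

lemma I_subset_V: "I \<subseteq> V"
  unfolding int_k_def by blast

lemma Z_subset_V: "Z \<subseteq> V"
  by (rule UN_least, rule ext_subset_V) simp

lemma X_I_disjoint: "X \<inter> I = {}"
  using ext_not_in_int[OF C1_component] by blast

lemma Z_I_disjoint: "Z \<inter> I = {}"
proof -
  have "v \<notin> I" if "v \<in> Z" for v
  proof -
    obtain C where "C \<in> kcomponents V E k" "v \<in> ext V E k C" using \<open>v \<in> Z\<close> by blast
    then show ?thesis by (rule ext_not_in_int)
  qed
  then show ?thesis by blast
qed

lemma X_Z_disjoint: "X \<inter> Z = {}"
  using ext_disjoint[OF _ C1_component] by blast

lemma card_Z: "card Z = (\<Sum>C\<in>kcomponents V E k - {C1}. card (ext V E k C))"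
proof (rule card_UN_disjoint)
  show "finite (kcomponents V E k - {C1})" using finite_kcomponents by simp
  show "\<forall>C\<in>kcomponents V E k - {C1}. finite (ext V E k C)"
    using ext_subset_V finite_if_subset_V by (meson DiffD1)
  show "\<forall>C\<in>kcomponents V E k - {C1}. \<forall>C'\<in>kcomponents V E k - {C1}.
      C \<noteq> C' \<longrightarrow> ext V E k C \<inter> ext V E k C' = {}"
    using ext_disjoint by (meson DiffD1)
qed

lemma card_V_le: "card V \<le> card X + card I + card Z"
proof -
  have "V \<subseteq> X \<union> I \<union> Z"
  proof
    fix v assume "v \<in> V"
    then consider "v \<in> I" | C where "C \<in> kcomponents V E k" "v \<in> ext V E k C"
      using in_int_or_ext by blast
    then show "v \<in> X \<union> I \<union> Z" by cases (auto simp: C1_component)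
  qed
  then have "card V \<le> card (X \<union> I \<union> Z)"
    using X_subset_V I_subset_V Z_subset_V by (intro card_mono finite_if_subset_V) auto
  also have "\<dots> \<le> card X + card I + card Z"
    by (meson card_Un_le add_right_mono le_trans)
  finally show ?thesis .
qed

lemma card_I_le: "real (card I) \<le> real (k - 1) * D"
proof (rule card_le_if_clique_free[OF I_subset_V _ _ _ int_clique_free])
  obtain x where "x \<in> X" using ext_nonempty[OF int_clique_free C1_component] by blast
  then show "0 < k" "0 \<le> D" using k_pos one_le_D X_subset_V by fastforce+
  show "\<forall>v\<in>I. real (card (non_nbrs I E v)) \<le> D"
    using card_non_nbrs_subset_le[OF I_subset_V] I_subset_V by blast
qed

lemma Z_subset_non_nbrs:
  assumes "x \<in> X" shows "Z \<subseteq> non_nbrs V E x"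
proof
  fix y assume "y \<in> Z"
  then obtain C where "C \<in> kcomponents V E k" "C \<noteq> C1" "y \<in> ext V E k C" by blast
  then have "\<not> E x y" using ext_nonadjacent[OF C1_component _ _ assms] by metis
  then show "y \<in> non_nbrs V E x" using \<open>y \<in> Z\<close> Z_subset_V unfolding non_nbrs_def by blast
qed

lemma card_X_lt_D: "real (card X) + 1 \<le> D"
proof -
  have "kcomponents V E k - {C1} \<noteq> {}"
  proof
    assume "kcomponents V E k - {C1} = {}"
    then have "card (kcomponents V E k) \<le> card {C1}" by (intro card_mono) auto
    then show False using two_components by simp
  qed
  then obtain C2 where C2: "C2 \<in> kcomponents V E k" "C2 \<noteq> C1" by blast
  then obtain z0 where z0: "z0 \<in> ext V E k C2" using ext_nonempty[OF int_clique_free] by blast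
  then have "z0 \<in> Z" using C2 by blast
  then have "z0 \<in> V" "z0 \<notin> X" using Z_subset_V X_Z_disjoint by blast+
  have "insert z0 X \<subseteq> non_nbrs V E z0"
  proof
    fix x assume "x \<in> insert z0 X"
    then consider "x = z0" | "x \<in> X" by blast
    then show "x \<in> non_nbrs V E z0"
    proof cases
      case 1
      then show ?thesis using self_in_non_nbrs[OF \<open>z0 \<in> V\<close>] by simp
    next
      case 2
      then have "\<not> E x z0" using Z_subset_non_nbrs \<open>z0 \<in> Z\<close> unfolding non_nbrs_def by blast
      then show ?thesis using 2 X_subset_V edge_sym unfolding non_nbrs_def by blast
    qed
  qed
  then have "card (insert z0 X) \<le> card (non_nbrs V E z0)"
    by (intro card_mono finite_if_subset_V) (auto simp: non_nbrs_def)
  moreover have "card (insert z0 X) = card X + 1"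
    using \<open>z0 \<notin> X\<close> finite_if_subset_V[OF X_subset_V] by simp
  ultimately have "real (card X) + 1 \<le> real (card (non_nbrs V E z0))"
    by (metis of_nat_1 of_nat_add of_nat_le_iff)
  then show ?thesis using card_non_nbrs_le \<open>z0 \<in> V\<close> by fastforce
qed

lemma card_non_nbrs_of_X:
  assumes "x \<in> X"
  shows "real (card Z + card (non_nbrs X E x) + card (non_nbrs I E x)) \<le> D"
proof -
  let ?nX = "non_nbrs X E x" and ?nI = "non_nbrs I E x"
  have fin: "finite Z" "finite ?nX" "finite ?nI"
    using Z_subset_V X_subset_V I_subset_V by (auto simp: non_nbrs_def intro: finite_if_subset_V)
  have "Z \<inter> ?nX = {}" "(Z \<union> ?nX) \<inter> ?nI = {}"
    using X_Z_disjoint X_I_disjoint Z_I_disjoint unfolding non_nbrs_def by blast+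
  then have "card (Z \<union> ?nX \<union> ?nI) = card Z + card ?nX + card ?nI"
    using fin by (simp add: card_Un_disjoint)
  moreover have "Z \<union> ?nX \<union> ?nI \<subseteq> non_nbrs V E x"
    using Z_subset_non_nbrs[OF assms] non_nbrs_mono[OF X_subset_V] non_nbrs_mono[OF I_subset_V]
    by (intro Un_least)
  then have "card (Z \<union> ?nX \<union> ?nI) \<le> card (non_nbrs V E x)"
    by (intro card_mono finite_if_subset_V) (auto simp: non_nbrs_def)
  ultimately have "real (card Z + card ?nX + card ?nI) \<le> real (card (non_nbrs V E x))"
    by (simp only: of_nat_le_iff)
  then show ?thesis using card_non_nbrs_le X_subset_V assms by fastforce
qed

lemma degree_in_X:
  assumes "x \<in> X"
  shows "real (card X) + real (card Z) - D \<le> real (card {y \<in> X. E x y})"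
proof -
  have "{y \<in> X. E x y} = X - non_nbrs X E x" unfolding non_nbrs_def by blast
  moreover have "non_nbrs X E x \<subseteq> X" unfolding non_nbrs_def by blast
  ultimately have "real (card {y \<in> X. E x y}) = real (card X) - real (card (non_nbrs X E x))"
    using X_subset_V finite_if_subset_V by (simp add: card_Diff_subset card_mono finite_subset)
  then show ?thesis using card_non_nbrs_of_X[OF assms] by simp
qed

lemma card_non_nbrs_I_of_X:
  assumes "x \<in> X"
  shows "real (card (non_nbrs I E x)) \<le> D - 1 - real (card Z)"
proof -
  have "finite (non_nbrs X E x)" using X_subset_V finite_if_subset_V unfolding non_nbrs_def by simp
  then have "1 \<le> card (non_nbrs X E x)"
    using self_in_non_nbrs[OF assms] by (metis One_nat_def Suc_leI card_gt_0_iff empty_iff)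
  then show ?thesis using card_non_nbrs_of_X[OF assms] by simp
qed

text \<open>The building blocks of the factor: copies of \<open>K\<^sub>k\<^sub>+\<^sub>1\<close> made of an
  edge inside \<open>X\<close> and \<open>k - 1\<close> vertices of \<open>I\<close>.\<close>
definition XI_clique :: "'a set \<Rightarrow> bool" where
  "XI_clique T \<longleftrightarrow> T \<in> kcliques V E (Suc k) \<and> T \<subseteq> X \<union> I \<and> card (T \<inter> I) = k - 1"

lemma finite_XI_cliques: "finite (Collect XI_clique)"
proof (rule finite_subset)
  show "Collect XI_clique \<subseteq> Pow V" unfolding XI_clique_def kcliques_def by blast
qed (simp add: finite_V)

lemma XI_clique_meets_X:
  assumes "XI_clique T" shows "T \<inter> X \<noteq> {}"
proof
  assume "T \<inter> X = {}"
  then have "T \<inter> I = T" using assms unfolding XI_clique_def by blast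
  then show False using assms unfolding XI_clique_def kcliques_def by auto
qed

lemma XI_clique_has_non_nbr:
  assumes T: "XI_clique T" and i: "i \<in> I - T"
  shows "\<exists>w\<in>T \<inter> I. \<not> E i w"
proof (rule ccontr)
  assume "\<not> (\<exists>w\<in>T \<inter> I. \<not> E i w)"
  then have adj: "\<forall>w\<in>T \<inter> I. E i w \<and> E w i" using edge_sym by blast
  have clique_T: "is_clique E T" and "card T = Suc k"
    using T unfolding XI_clique_def kcliques_def by simp_all
  then have "finite (T \<inter> I)" by (simp add: card_ge_0_finite)
  have "is_clique E (insert i (T \<inter> I))"
    using clique_T adj unfolding is_clique_def by blast
  moreover have "card (insert i (T \<inter> I)) = k"
    using \<open>finite (T \<inter> I)\<close> i T two_le_k unfolding XI_clique_def by simp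
  moreover have "insert i (T \<inter> I) \<subseteq> I" using i by blast
  ultimately show False using int_clique_free by blast
qed

text \<open>Each clique of \<open>F\<close> contributes its own non-neighbour of \<open>i\<close>.\<close>
lemma card_non_nbrs_outside_factor:
  assumes F: "F \<subseteq> Collect XI_clique" "pairwise disjnt F" and i: "i \<in> I - \<Union>F"
  shows "real (card F) + real (card (non_nbrs (I - \<Union>F) E i)) \<le> D"
proof -
  let ?N = "non_nbrs (I - \<Union>F) E i"
  have "\<exists>w. w \<in> T \<inter> I \<and> \<not> E i w" if "T \<in> F" for T
  proof -
    have "XI_clique T" "i \<in> I - T" using F(1) i that by auto
    then show ?thesis using XI_clique_has_non_nbr by blast
  qed
  then obtain f where f: "\<And>T. T \<in> F \<Longrightarrow> f T \<in> T \<inter> I \<and> \<not> E i (f T)" by metis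
  have "inj_on f F"
  proof (rule inj_onI)
    fix T T' assume "T \<in> F" "T' \<in> F" "f T = f T'"
    then have "\<not> disjnt T T'" using f[of T] f[of T'] unfolding disjnt_def by auto
    then show "T = T'" using pairwiseD[OF F(2) \<open>T \<in> F\<close> \<open>T' \<in> F\<close>] by blast
  qed
  then have "card (f ` F) = card F" by (rule card_image)
  moreover have "f ` F \<inter> ?N = {}"
    using f unfolding non_nbrs_def by blast
  moreover have sub: "f ` F \<union> ?N \<subseteq> non_nbrs V E i"
    using f I_subset_V unfolding non_nbrs_def by blast
  have "finite (non_nbrs V E i)" by (rule finite_if_subset_V) (auto simp: non_nbrs_def)
  then have "finite (f ` F \<union> ?N)" using sub by (rule finite_subset[rotated])
  ultimately have "card F + card ?N = card (f ` F \<union> ?N)"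
    by (simp add: card_Un_disjoint)
  also have "\<dots> \<le> card (non_nbrs V E i)"
    using sub \<open>finite (non_nbrs V E i)\<close> by (rule card_mono[rotated])
  finally have "real (card F) + real (card ?N) \<le> real (card (non_nbrs V E i))"
    by (simp only: of_nat_add[symmetric] of_nat_le_iff)
  then show ?thesis using card_non_nbrs_le i I_subset_V by fastforce
qed

lemma card_I_inter_factor:
  assumes "F \<subseteq> Collect XI_clique"
  shows "card (I \<inter> \<Union>F) \<le> (k - 1) * card F"
proof -
  have "finite F" using finite_subset[OF assms finite_XI_cliques] .
  have "I \<inter> \<Union>F = (\<Union>T\<in>F. T \<inter> I)" by blast
  then have "card (I \<inter> \<Union>F) \<le> (\<Sum>T\<in>F. card (T \<inter> I))"
    using card_UN_le[OF \<open>finite F\<close>] by (simp only:)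
  also have "\<dots> = (\<Sum>T\<in>F. k - 1)"
    using assms unfolding XI_clique_def by (intro sum.cong) auto
  finally show ?thesis by (simp add: mult.commute)
qed

lemma card_common_nbrs:
  assumes "F \<subseteq> Collect XI_clique" "x \<in> X" "y \<in> X"
  shows "real (card I) - real ((k - 1) * card F) - 2 * (D - 1 - real (card Z))
    \<le> real (card {w \<in> I - \<Union>F. E x w \<and> E y w})"
proof -
  let ?P = "{w \<in> I - \<Union>F. E x w \<and> E y w}"
  let ?U = "?P \<union> non_nbrs I E x \<union> non_nbrs I E y"
  have finI: "finite I" using I_subset_V by (rule finite_if_subset_V)
  have "card I = card ((I - \<Union>F) \<union> (I \<inter> \<Union>F))" by (rule arg_cong[where f = card]) blast
  then have "card I \<le> card (I - \<Union>F) + card (I \<inter> \<Union>F)" using card_Un_le by simp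
  moreover have "card (I - \<Union>F) \<le> card ?U"
  proof (rule card_mono)
    show "finite ?U" using finI unfolding non_nbrs_def by simp
    show "I - \<Union>F \<subseteq> ?U" unfolding non_nbrs_def by blast
  qed
  moreover have "card ?U \<le> card ?P + card (non_nbrs I E x) + card (non_nbrs I E y)"
    by (meson card_Un_le add_right_mono le_trans)
  ultimately have "card I \<le> card ?P + card (non_nbrs I E x) + card (non_nbrs I E y) + (k - 1) * card F"
    using card_I_inter_factor[OF assms(1)] by linarith
  then have "real (card I) \<le> real (card ?P) + real (card (non_nbrs I E x))
      + real (card (non_nbrs I E y)) + real ((k - 1) * card F)"
    by (simp only: of_nat_add[symmetric] of_nat_le_iff)
  then show ?thesis using card_non_nbrs_I_of_X[OF assms(2)] card_non_nbrs_I_of_X[OF assms(3)] by argo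
qed

lemma XI_clique_of_edge:
  assumes xy: "x \<in> X" "y \<in> X" "x \<noteq> y" "E x y"
    and B: "B \<subseteq> I" "is_clique E B" "card B = k - 1" "\<forall>w\<in>B. E x w \<and> E y w"
  shows "XI_clique (insert x (insert y B))" "insert x (insert y B) \<inter> X = {x, y}"
proof -
  let ?T = "insert x (insert y B)"
  have "B \<inter> X = {}" using B(1) X_I_disjoint by blast
  then have "x \<notin> B" "y \<notin> B" using xy(1,2) by blast+
  have TI: "?T \<inter> I = B" using xy(1,2) B(1) X_I_disjoint by blast
  have "finite B" using B(1) I_subset_V finite_if_subset_V by blast
  then have "card ?T = Suc k" using \<open>x \<notin> B\<close> \<open>y \<notin> B\<close> xy(3) B(3) two_le_k by simp
  moreover have "?T \<subseteq> V" using xy(1,2) B(1) X_subset_V I_subset_V by blast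
  moreover have "is_clique E ?T"
  proof -
    have "E y x" "\<forall>w\<in>B. E w x \<and> E w y" using xy(4) B(4) edge_sym by blast+
    then show ?thesis using B(2,4) xy(4) unfolding is_clique_def by blast
  qed
  ultimately have "?T \<in> kcliques V E (Suc k)" unfolding kcliques_def by simp
  moreover have "?T \<subseteq> X \<union> I" using xy(1,2) B(1) by blast
  ultimately show "XI_clique ?T" unfolding XI_clique_def using TI B(3) by simp
  show "?T \<inter> X = {x, y}" using \<open>B \<inter> X = {}\<close> xy(1,2) by blast
qed

lemma extend_partial_factor:
  assumes F: "F \<subseteq> Collect XI_clique" "pairwise disjnt F"
    and xy: "x \<in> X - \<Union>F" "y \<in> X - \<Union>F" "x \<noteq> y" "E x y"
    and few: "real (card F) \<le> D" "real k * D + real (card F) < real (card I) + 2 * real (card Z) + 2"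
  obtains T where "XI_clique T" "T \<inter> X = {x, y}" "T \<inter> \<Union>F = {}"
proof -
  define P where "P = {w \<in> I - \<Union>F. E x w \<and> E y w}"
  have "P \<subseteq> V" unfolding P_def using I_subset_V by blast
  have sparse: "\<forall>v\<in>P. real (card (non_nbrs P E v)) \<le> D - real (card F)"
  proof
    fix v assume "v \<in> P"
    then have v: "v \<in> I - \<Union>F" unfolding P_def by blast
    have "card (non_nbrs P E v) \<le> card (non_nbrs (I - \<Union>F) E v)"
      unfolding P_def non_nbrs_def using I_subset_V by (intro card_mono finite_if_subset_V) auto
    then have "real (card (non_nbrs P E v)) \<le> real (card (non_nbrs (I - \<Union>F) E v))" by simp
    then show "real (card (non_nbrs P E v)) \<le> D - real (card F)"
      using card_non_nbrs_outside_factor[OF F v] by linarith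
  qed
  have big: "real (k - 1 - 1) * (D - real (card F)) < real (card P)"
  proof -
    have "real (card I) - real ((k - 1) * card F) - 2 * (D - 1 - real (card Z)) \<le> real (card P)"
      using card_common_nbrs[OF F(1)] xy(1,2) unfolding P_def by blast
    moreover have "real (k - 1 - 1) * (D - real (card F))
        = real k * D - real k * real (card F) - 2 * D + 2 * real (card F)"
      using two_le_k by (simp add: of_nat_diff algebra_simps)
    moreover have "real ((k - 1) * card F) = real k * real (card F) - real (card F)"
      using two_le_k by (simp add: of_nat_diff algebra_simps)
    ultimately show ?thesis using few(2) by argo
  qed
  have "is_clique E {}" "card {} \<le> k - 1" "0 \<le> D - real (card F)"
    using few(1) unfolding is_clique_def by simp_all
  then obtain B where B: "B \<subseteq> P" "is_clique E B" "card B = k - 1"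
    using clique_extend_greedy[OF \<open>P \<subseteq> V\<close> empty_subsetI _ _ _ sparse big] by blast
  then have "B \<subseteq> I" "\<forall>w\<in>B. E x w \<and> E y w" "B \<inter> \<Union>F = {}" unfolding P_def by blast+
  then have "XI_clique (insert x (insert y B))" "insert x (insert y B) \<inter> X = {x, y}"
    using XI_clique_of_edge[OF _ _ xy(3,4) _ B(2,3)] xy(1,2) by blast+
  moreover have "insert x (insert y B) \<inter> \<Union>F = {}" using \<open>B \<inter> \<Union>F = {}\<close> xy(1,2) by blast
  ultimately show ?thesis by (rule that)
qed

lemma XI_factor_from_matching:
  assumes M: "is_matching E X M"
    and few: "real (card M) \<le> D" "real k * D + real (card M) \<le> real (card I) + 2 * real (card Z) + 2"
  shows "\<exists>F. F \<subseteq> Collect XI_clique \<and> pairwise disjnt F \<and> card F = card M"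
proof -
  have finM: "finite M" using finite_matching[OF M X_subset_V] .
  have "\<exists>F. F \<subseteq> Collect XI_clique \<and> pairwise disjnt F \<and> card F = card M' \<and> X \<inter> \<Union>F \<subseteq> \<Union>M'"
    if "M' \<subseteq> M" for M'
    using finite_subset[OF that finM] that
  proof (induction M' rule: finite_subset_induct')
    case empty
    show ?case by (intro exI[of _ "{}"]) simp
  next
    case (insert e M')
    obtain F where F: "F \<subseteq> Collect XI_clique" "pairwise disjnt F" "card F = card M'"
      "X \<inter> \<Union>F \<subseteq> \<Union>M'" using insert.IH by blast
    obtain x y where xy: "x \<noteq> y" "E x y" "e = {x, y}" "x \<in> X" "y \<in> X"
      using matching_edgeE[OF M insert.hyps(2)] by metis
    have pw: "pairwise disjnt M" using M unfolding is_matching_def by simp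
    have "e \<inter> e' = {}" if "e' \<in> M'" for e'
    proof -
      have "e' \<in> M" "e \<noteq> e'" using that insert.hyps(3,4) by auto
      then show ?thesis using pairwiseD[OF pw insert.hyps(2)] unfolding disjnt_def by blast
    qed
    then have "x \<in> X - \<Union>F" "y \<in> X - \<Union>F" using F(4) xy(3-5) by blast+
    have "M' \<subset> M" using insert.hyps(2-4) by blast
    then have "card M' < card M" using finM by (rule psubset_card_mono[rotated])
    then have "real (card F) \<le> D" "real k * D + real (card F) < real (card I) + 2 * real (card Z) + 2"
      using few F(3) by linarith+
    then obtain T where T: "XI_clique T" "T \<inter> X = {x, y}" "T \<inter> \<Union>F = {}"
      by (rule extend_partial_factor[OF F(1,2) \<open>x \<in> X - \<Union>F\<close> \<open>y \<in> X - \<Union>F\<close> xy(1,2)])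
    have "T \<notin> F" using T(2,3) by blast
    show ?case
    proof (intro exI[of _ "insert T F"] conjI)
      show "insert T F \<subseteq> Collect XI_clique" using F(1) T(1) by blast
      show "pairwise disjnt (insert T F)"
        using F(2) T(3) unfolding pairwise_insert disjnt_def by blast
      show "card (insert T F) = card (insert e M')"
        using F(3) \<open>T \<notin> F\<close> insert.hyps(1,4) finite_subset[OF F(1) finite_XI_cliques] by simp
      show "X \<inter> \<Union>(insert T F) \<subseteq> \<Union>(insert e M')" using F(4) T(2) xy(3) by blast
    qed
  qed
  from this[OF subset_refl] show ?thesis by auto
qed

lemma CKF_ge_multiple:
  assumes "2 * s \<le> card X" "real s < real (card X) + real (card Z) - D + 1"
    and "real s < real (card I) + 2 * real (card Z) - real k * D + 1"
  shows "(k + 1) * s \<le> CKF V E k"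
proof -
  have "s \<le> card {y \<in> X. E x y}" if "x \<in> X" for x
  proof -
    have "real s < real (card {y \<in> X. E x y} + 1)" using degree_in_X[OF that] assms(2) by simp
    then show ?thesis by linarith
  qed
  then obtain M where M: "is_matching E X M" "card M = s"
    using matching_exists[OF X_subset_V _ assms(1)] by blast
  have "real s \<le> D" using assms(1) card_X_lt_D by linarith
  then obtain F where F: "F \<subseteq> Collect XI_clique" "pairwise disjnt F" "card F = s"
    using XI_factor_from_matching[OF M(1)] M(2) assms(3) by fastforce
  have "F \<subseteq> kcliques V E (Suc k)" using F(1) unfolding XI_clique_def by blast
  moreover have "\<forall>T\<in>F. T \<inter> X \<noteq> {}" using F(1) XI_clique_meets_X by blast
  ultimately have "is_connected_factor V E k F"
    using connected_factor_if_meets_ext[OF _ F(2) k_pos C1_component] by blast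
  moreover have "card (\<Union>F) = (k + 1) * s"
    using card_Union_kcliques[OF \<open>F \<subseteq> kcliques V E (Suc k)\<close> F(2)] F(3) by simp
  ultimately show ?thesis using card_Union_le_CKF by metis
qed

lemma CKF_lower_bound:
  "real (k + 1) * min (real (card V) - real k * D)
     (min (real_of_int \<lfloor>real (card X) / 2\<rfloor>) (real (card V) - real k * D + real (card Z) - real (card X)))
   \<le> real (CKF V E k)" (is "_ * ?m \<le> _")
proof (cases "?m \<le> 0")
  case True
  then have "real (k + 1) * ?m \<le> 0" by (intro mult_nonneg_nonpos) auto
  then show ?thesis by (meson of_nat_0_le_iff order_trans)
next
  case False
  define s where "s = nat \<lceil>?m\<rceil>"
  have s: "?m \<le> real s" "real s < ?m + 1" unfolding s_def using False by linarith+
  have "\<lceil>?m\<rceil> \<le> \<lfloor>real (card X) / 2\<rfloor>" by (simp add: ceiling_le_iff)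
  then have "2 * s \<le> card X" unfolding s_def using False by linarith
  moreover have "real (card V) \<le> real (card X) + real (card I) + real (card Z)"
    using card_V_le by (simp only: of_nat_add[symmetric] of_nat_le_iff)
  moreover have "real (k - 1) * D = real k * D - D" using k_pos by (simp add: of_nat_diff algebra_simps)
  ultimately have "(k + 1) * s \<le> CKF V E k"
    using s card_I_le by (intro CKF_ge_multiple) linarith+
  then have "real (k + 1) * real s \<le> real (CKF V E k)" by (metis of_nat_le_iff of_nat_mult)
  moreover have "real (k + 1) * ?m \<le> real (k + 1) * real s" using s(1) by (intro mult_left_mono) auto
  ultimately show ?thesis by linarith
qed

end

theorem lemma6p6:
  fixes V :: "'a set" and E :: "'a \<Rightarrow> 'a \<Rightarrow> bool" and k n :: nat and \<delta> :: real
    and C1 :: "'a set set"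
  assumes "is_graph V E"
    and "3 \<le> k"
    and "n = card V"
    and "\<forall>v\<in>V. \<delta> \<le> real (degree V E v)"
    and "\<delta> > real (k - 1) * real n / real k"
    and "2 \<le> card (kcomponents V E k)"
    and "\<not> (\<exists>S \<subseteq> int_k V E k. card S = k \<and> is_clique E S)"
    and "C1 \<in> kcomponents V E k"
  shows "real (CKF V E k) \<ge> real (k + 1) *
     min (real k * \<delta> - real (k - 1) * real n)
       (min (real_of_int \<lfloor>real (card (ext V E k C1)) / 2\<rfloor>)
            (real k * \<delta> - real (k - 1) * real n
              + real (\<Sum>C\<in>kcomponents V E k - {C1}. card (ext V E k C))
              - real (card (ext V E k C1))))"
proof -
  interpret simple_graph V E using assms(1) by unfold_locales
  have excess: "real k * \<delta> - real (k - 1) * real n = real n - real k * (real n - \<delta>)"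
    using assms(2) by (simp add: of_nat_diff algebra_simps)
  interpret clique_free_interior V E k "real n - \<delta>" C1
  proof unfold_locales
    show "\<forall>v\<in>V. real (card (non_nbrs V E v)) \<le> real n - \<delta>"
      using card_non_nbrs_plus_degree assms(3,4) by (metis add_diff_cancel_right' diff_left_mono of_nat_add)
    have "real (k - 1) * real n < \<delta> * real k" using assms(2,5) by (simp add: pos_divide_less_eq)
    then show "real k * (real n - \<delta>) < real (card V)"
      using assms(2,3) by (simp add: of_nat_diff algebra_simps)
  qed (use assms(2,6-8) in auto)
  show ?thesis
    using CKF_lower_bound[unfolded card_Z, folded assms(3), folded excess] by simp
qed

end
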